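(* Let $n>3$ be real, let $m=1/2$, and let $K=K(1/2)=\int_0^{\pi/2}\bigl(1-\tfrac12\sin^2\theta\bigr)^{-1/2}\,d\theta$. Define $g:\mathbb R\to\mathbb R$ by $g(x)=\operatorname{cn}(x,1/2)^n$ for $x\in[-K,K]$ and $g(x)=0$ otherwise. Then $g$ is of class $C^3$ on $\mathbb R$ and satisfies $$n\,g'''(x)\,g(x)^2-3n\,g''(x)\,g'(x)\,g(x)+2\left(n-\tfrac1n\right)g'(x)^3=0\qquad\text{for all }x\in\mathbb R.$$ Consequently, for any constants $\alpha\neq 0,\beta,\gamma,\delta\in\mathbb R$, the function $Y(x)=\gamma\int_{-\infty}^{x}g(\alpha t+\beta)\,dt+\delta$ is a $C^4$ solution on $\mathbb R$ of $Y''''(Y')^2-3Y'''Y''Y'+2(1-n^{-2})(Y'')^3=0$.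
   Context: $\operatorname{sn}(x,m),\operatorname{cn}(x,m),\operatorname{dn}(x,m)$ denote the Jacobian elliptic functions with parameter $m\in[0,1)$; they satisfy $\operatorname{sn}'=\operatorname{cn}\operatorname{dn}$, $\operatorname{cn}'=-\operatorname{sn}\operatorname{dn}$, $\operatorname{dn}'=-m\operatorname{sn}\operatorname{cn}$, $\operatorname{sn}^2+\operatorname{cn}^2=1$, $\operatorname{dn}^2+m\operatorname{sn}^2=1$, with $\operatorname{cn}(0,m)=1$, $\operatorname{sn}(0,m)=0$. $K(m)$ is the complete elliptic integral of the first kind; $\operatorname{cn}(x,m)>0$ for $|x|<K(m)$ and $\operatorname{cn}(\pm K(m),m)=0$. *)

theory Defs
  imports "HOL-Analysis.Analysis"
begin

definition ellF :: "real \<Rightarrow> real \<Rightarrow> real" where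
  "ellF m \<phi> = (if 0 \<le> \<phi> then integral {0..\<phi>} (\<lambda>\<theta>. 1 / sqrt (1 - m * (sin \<theta>)\<^sup>2))
               else - integral {\<phi>..0} (\<lambda>\<theta>. 1 / sqrt (1 - m * (sin \<theta>)\<^sup>2)))"

definition ellK :: "real \<Rightarrow> real" where
  "ellK m = ellF m (pi / 2)"

text \<open>Jacobi amplitude: the inverse of phi |-> F(phi,m) (a bijection of the reals for 0 <= m < 1).\<close>
definition jacobi_am :: "real \<Rightarrow> real \<Rightarrow> real" where
  "jacobi_am m x = (THE \<phi>. ellF m \<phi> = x)"

definition jacobi_sn :: "real \<Rightarrow> real \<Rightarrow> real" where
  "jacobi_sn m x = sin (jacobi_am m x)"

definition jacobi_cn :: "real \<Rightarrow> real \<Rightarrow> real" where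
  "jacobi_cn m x = cos (jacobi_am m x)"

definition jacobi_dn :: "real \<Rightarrow> real \<Rightarrow> real" where
  "jacobi_dn m x = sqrt (1 - m * (sin (jacobi_am m x))\<^sup>2)"

end

(*
  For m = 1/2 write u = cn and w = sn dn. Then u' = -w, w' = u^3 and w^2 = (1 - u^4)/2, so on
  (-K, K), where u > 0, every derivative of u^n is a combination of terms u^r and w u^r, and the
  differential equation becomes a polynomial identity in u and w modulo w^2 = (1 - u^4)/2.
  Because n > 3, all exponents in the first three derivatives are positive, so these derivatives
  vanish at the zeros +-K of cn; the extension by zero of each one is then the primitive of the
  extension by zero of the next (fundamental theorem of calculus), which makes g a C^3 function
  satisfying the identity everywhere. The statement about Y follows from the chain rule for
  x |-> alpha x + beta, the primitive over a half-line existing because g has compact support.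
*)
theory Submission
  imports Defs
begin

section \<open>Extension by zero and primitives\<close>

lemma continuous_on_cutoff:
  fixes f :: "real \<Rightarrow> real"
  assumes "a \<le> b" "continuous_on {a..b} f" "f a = 0" "f b = 0"
  shows "continuous_on UNIV (\<lambda>x. if x \<in> {a..b} then f x else 0)"
proof -
  have "(\<lambda>x. if x \<in> {a..b} then f x else 0) = f \<circ> (\<lambda>x. max a (min b x))"
    using assms(1,3,4) by (auto simp: fun_eq_iff max_def min_def)
  moreover have "continuous_on UNIV (\<lambda>x. max a (min b x))"
    by (intro continuous_intros)
  moreover have "(\<lambda>x. max a (min b x)) ` UNIV \<subseteq> {a..b}"
    using assms(1) by auto
  ultimately show ?thesis
    using continuous_on_compose continuous_on_subset[OF assms(2)] by metis
qed

lemma has_integral_atMost_vanishing_below: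
  fixes h :: "real \<Rightarrow> real"
  assumes "continuous_on UNIV h" "\<And>t. t \<le> L \<Longrightarrow> h t = 0" "L \<le> x"
  shows "(h has_integral integral {L..x} h) {..x}"
proof -
  have "h integrable_on {L..x}"
    by (rule integrable_continuous_interval[OF continuous_on_subset[OF assms(1)]]) simp
  then have "(h has_integral integral {L..x} h) {L..x}"
    by (rule integrable_integral)
  then have "((\<lambda>t. if t \<in> {L..x} then h t else 0) has_integral integral {L..x} h) {..x}"
    by (rule has_integral_on_superset[OF has_integral_eq[rotated]]) auto
  then show ?thesis
    by (rule has_integral_eq[rotated]) (use assms(2) in auto)
qed

lemma integral_atMost_vanishing_below:
  fixes h :: "real \<Rightarrow> real"
  assumes "continuous_on UNIV h" "\<And>t. t \<le> L \<Longrightarrow> h t = 0" "L \<le> x"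
  shows "integral {..x} h = integral {L..x} h"
  using has_integral_atMost_vanishing_below[OF assms] by (rule integral_unique)

lemma integrable_on_atMost_vanishing_below:
  fixes h :: "real \<Rightarrow> real"
  assumes "continuous_on UNIV h" "\<And>t. t \<le> L \<Longrightarrow> h t = 0"
  shows "h integrable_on {..x}"
  using has_integral_atMost_vanishing_below[OF assms(1), of "min L x" x] assms(2) by auto

lemma has_real_derivative_integral_atMost:
  fixes h :: "real \<Rightarrow> real"
  assumes "continuous_on UNIV h" "\<And>t. t \<le> L \<Longrightarrow> h t = 0"
  shows "((\<lambda>x. integral {..x} h) has_real_derivative h x) (at x)"
proof -
  define L' where "L' = min L (x - 1)"
  have L': "L' < x" "\<And>t. t \<le> L' \<Longrightarrow> h t = 0"
    using assms(2) by (auto simp: L'_def)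
  have "((\<lambda>y. integral {L'..y} h) has_real_derivative h x) (at x within {L'..x + 1})"
    using L'(1) by (intro integral_has_real_derivative continuous_on_subset[OF assms(1)]) auto
  moreover have "x \<in> interior {L'..x + 1}"
    using L'(1) by simp
  ultimately have "((\<lambda>y. integral {L'..y} h) has_real_derivative h x) (at x)"
    by (metis at_within_interior)
  then show ?thesis
  proof (rule has_field_derivative_transform_within_open[where S = "{L'<..}"])
    fix y assume "y \<in> {L'<..}"
    then show "integral {L'..y} h = integral {..y} h"
      using L'(2) by (intro integral_atMost_vanishing_below[symmetric] assms(1)) auto
  qed (use L'(1) in auto)
qed

lemma integral_atMost_cutoff:
  fixes f f' :: "real \<Rightarrow> real"
  assumes "a \<le> b" "continuous_on {a..b} f" "continuous_on {a..b} f'"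
    and "f a = 0" "f b = 0" "f' a = 0" "f' b = 0"
    and "\<And>x. a < x \<Longrightarrow> x < b \<Longrightarrow> (f has_real_derivative f' x) (at x)"
  shows "integral {..x} (\<lambda>t. if t \<in> {a..b} then f' t else 0) = (if x \<in> {a..b} then f x else 0)"
proof -
  define h where "h = (\<lambda>t. if t \<in> {a..b} then f' t else 0)"
  have h_cont: "continuous_on UNIV h"
    unfolding h_def by (rule continuous_on_cutoff[OF assms(1,3,6,7)])
  have h_below: "h t = 0" if "t \<le> a" for t
    using that assms(6) by (cases "t = a") (auto simp: h_def)
  have ftc: "integral {a..y} f' = f y" if "a \<le> y" "y \<le> b" for y
    using fundamental_theorem_of_calculus_interior[of a y f f'] that assms(4,8)
      continuous_on_subset[OF assms(2), of "{a..y}"]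
    by (auto simp: has_real_derivative_iff_has_vector_derivative integral_unique)
  consider "x < a" | "a \<le> x" "x \<le> b" | "b < x" by linarith
  then have "integral {..x} h = (if x \<in> {a..b} then f x else 0)"
  proof cases
    case 1
    then show ?thesis
      using integral_atMost_vanishing_below[OF h_cont, of x x] h_below by simp
  next
    case 2
    have "integral {..x} h = integral {a..x} h"
      using 2 by (intro integral_atMost_vanishing_below[OF h_cont h_below])
    also have "\<dots> = integral {a..x} f'"
      using 2 by (intro integral_cong) (auto simp: h_def)
    finally show ?thesis using 2 ftc by simp
  next
    case 3
    have "a \<le> x"
      using 3 assms(1) by linarith
    then have "integral {..x} h = integral {a..x} h"
      by (intro integral_atMost_vanishing_below[OF h_cont h_below])
    also have "\<dots> = integral {a..b} h + integral {b..x} h"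
      using 3 assms(1) integrable_continuous_interval[OF continuous_on_subset[OF h_cont]]
      by (intro Henstock_Kurzweil_Integration.integral_combine[symmetric]) auto
    also have "\<dots> = integral {a..b} f' + integral {b..x} (\<lambda>_. 0)"
      using assms(7) by (intro arg_cong2[where f = "(+)"] integral_cong) (auto simp: h_def)
    finally show ?thesis
      using 3 assms(1,5) ftc by simp
  qed
  then show ?thesis by (simp add: h_def)
qed

lemma has_real_derivative_cutoff:
  fixes f f' :: "real \<Rightarrow> real"
  assumes "a \<le> b" "continuous_on {a..b} f" "continuous_on {a..b} f'"
    and "f a = 0" "f b = 0" "f' a = 0" "f' b = 0"
    and "\<And>x. a < x \<Longrightarrow> x < b \<Longrightarrow> (f has_real_derivative f' x) (at x)"
  shows "((\<lambda>x. if x \<in> {a..b} then f x else 0) has_real_derivative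
    (if x \<in> {a..b} then f' x else 0)) (at x)"
proof -
  have "(\<lambda>x. if x \<in> {a..b} then f x else 0) = (\<lambda>x. integral {..x} (\<lambda>t. if t \<in> {a..b} then f' t else 0))"
    using integral_atMost_cutoff[OF assms] by simp
  moreover have "((\<lambda>x. integral {..x} (\<lambda>t. if t \<in> {a..b} then f' t else 0)) has_real_derivative
      (if x \<in> {a..b} then f' x else 0)) (at x)"
    using assms(6) by (intro has_real_derivative_integral_atMost[where L = a]
        continuous_on_cutoff[OF assms(1,3,6,7)]) auto
  ultimately show ?thesis by simp
qed

lemma affine_below_outside_interval:
  fixes \<alpha> \<beta> a b :: real
  assumes "\<alpha> \<noteq> 0"
  obtains L where "\<And>t. t \<le> L \<Longrightarrow> \<alpha> * t + \<beta> \<notin> {a..b}"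
proof
  define R where "R = \<bar>a\<bar> + \<bar>b\<bar> + \<bar>\<beta>\<bar> + 1"
  fix t assume t: "t \<le> - R / \<bar>\<alpha>\<bar>"
  have "R \<le> (- t) * \<bar>\<alpha>\<bar>"
    using t assms by (simp add: field_simps)
  also have "\<dots> \<le> \<bar>t\<bar> * \<bar>\<alpha>\<bar>"
    by (intro mult_right_mono) auto
  finally have "R \<le> \<bar>\<alpha>\<bar> * \<bar>t\<bar>"
    by (simp add: mult.commute)
  then have "\<bar>a\<bar> + \<bar>b\<bar> < \<bar>\<alpha> * t + \<beta>\<bar>"
    unfolding R_def abs_mult[symmetric] by linarith
  then show "\<alpha> * t + \<beta> \<notin> {a..b}"
    by auto
qed

lemma has_real_derivative_affine_rescale:
  fixes f f' :: "real \<Rightarrow> real"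
  assumes "\<And>y. (f has_real_derivative f' y) (at y)"
  shows "((\<lambda>x. c * f (\<alpha> * x + \<beta>)) has_real_derivative c * \<alpha> * f' (\<alpha> * x + \<beta>)) (at x)"
proof -
  have "((\<lambda>x. \<alpha> * x + \<beta>) has_real_derivative \<alpha>) (at x)"
    by (auto intro!: derivative_eq_intros)
  from DERIV_cmult[OF DERIV_chain2[OF assms this], of c] show ?thesis
    by (simp add: ac_simps)
qed

lemma rescaled_ode:
  fixes n \<alpha> \<gamma> G G1 G2 G3 :: real
  assumes "n \<noteq> 0" "n * G3 * G^2 - 3 * n * G2 * G1 * G + 2 * (n - 1 / n) * G1^3 = 0"
  shows "(\<gamma> * \<alpha> * \<alpha> * \<alpha> * G3) * (\<gamma> * G)^2 - 3 * (\<gamma> * \<alpha> * \<alpha> * G2) * (\<gamma> * \<alpha> * G1) * (\<gamma> * G)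
    + 2 * (1 - 1 / n^2) * (\<gamma> * \<alpha> * G1)^3 = 0"
proof -
  let ?E = "G3 * G^2 - 3 * G2 * G1 * G + 2 * (1 - 1 / n^2) * G1^3"
  have "n * ?E = n * G3 * G^2 - 3 * n * G2 * G1 * G + 2 * (n - 1 / n) * G1^3"
    using assms(1) by (simp add: field_simps power2_eq_square)
  then have "?E = 0"
    using assms by simp
  moreover have "(\<gamma> * \<alpha> * \<alpha> * \<alpha> * G3) * (\<gamma> * G)^2 - 3 * (\<gamma> * \<alpha> * \<alpha> * G2) * (\<gamma> * \<alpha> * G1) * (\<gamma> * G)
      + 2 * (1 - 1 / n^2) * (\<gamma> * \<alpha> * G1)^3 = \<gamma> ^ 3 * \<alpha> ^ 3 * ?E"
    by (simp add: power2_eq_square power3_eq_cube algebra_simps)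
  ultimately show ?thesis by simp
qed

lemma primitive_of_rescaled_ode:
  fixes g g1 g2 g3 :: "real \<Rightarrow> real" and n a b \<alpha> \<beta> \<gamma> \<delta> :: real
  assumes g1: "\<forall>x. (g has_real_derivative g1 x) (at x)"
    and g2: "\<forall>x. (g1 has_real_derivative g2 x) (at x)"
    and g3: "\<forall>x. (g2 has_real_derivative g3 x) (at x)"
    and g3_cont: "continuous_on UNIV g3"
    and ode: "\<forall>x. n * g3 x * (g x)^2 - 3 * n * g2 x * g1 x * g x + 2 * (n - 1 / n) * (g1 x)^3 = 0"
    and "n \<noteq> 0" "\<alpha> \<noteq> 0"
    and support: "\<And>x. x \<notin> {a..b} \<Longrightarrow> g x = 0"
  shows "(\<forall>x. (\<lambda>t. g (\<alpha> * t + \<beta>)) integrable_on {..x}) \<and>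
    (\<exists>Y1 Y2 Y3 Y4.
       let Y = (\<lambda>x. \<gamma> * integral {..x} (\<lambda>t. g (\<alpha> * t + \<beta>)) + \<delta>) in
       (\<forall>x. (Y has_real_derivative Y1 x) (at x)) \<and>
       (\<forall>x. (Y1 has_real_derivative Y2 x) (at x)) \<and>
       (\<forall>x. (Y2 has_real_derivative Y3 x) (at x)) \<and>
       (\<forall>x. (Y3 has_real_derivative Y4 x) (at x)) \<and>
       continuous_on UNIV Y4 \<and>
       (\<forall>x. Y4 x * (Y1 x)^2 - 3 * Y3 x * Y2 x * Y1 x + 2 * (1 - 1 / n^2) * (Y2 x)^3 = 0))"
proof -
  let ?h = "\<lambda>t. g (\<alpha> * t + \<beta>)"
  obtain L where L: "\<And>t. t \<le> L \<Longrightarrow> ?h t = 0"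
    using affine_below_outside_interval[OF \<open>\<alpha> \<noteq> 0\<close>, of \<beta> a b] support by metis
  have "continuous_on UNIV g"
    using g1 by (intro continuous_at_imp_continuous_on) (blast intro: DERIV_isCont)
  then have h_cont: "continuous_on UNIV ?h"
    by (rule continuous_on_compose2) (auto intro: continuous_intros)
  define Y1 where "Y1 = (\<lambda>x. \<gamma> * g (\<alpha> * x + \<beta>))"
  define Y2 where "Y2 = (\<lambda>x. \<gamma> * \<alpha> * g1 (\<alpha> * x + \<beta>))"
  define Y3 where "Y3 = (\<lambda>x. \<gamma> * \<alpha> * \<alpha> * g2 (\<alpha> * x + \<beta>))"
  define Y4 where "Y4 = (\<lambda>x. \<gamma> * \<alpha> * \<alpha> * \<alpha> * g3 (\<alpha> * x + \<beta>))"
  have "((\<lambda>x. integral {..x} ?h) has_real_derivative ?h x) (at x)" for x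
    by (rule has_real_derivative_integral_atMost[OF h_cont]) (rule L)
  then have "((\<lambda>x. \<gamma> * integral {..x} ?h + \<delta>) has_real_derivative \<gamma> * ?h x + 0) (at x)" for x
    by (intro DERIV_add DERIV_cmult DERIV_const)
  then have "((\<lambda>x. \<gamma> * integral {..x} ?h + \<delta>) has_real_derivative Y1 x) (at x)" for x
    by (simp add: Y1_def)
  moreover have "(Y1 has_real_derivative Y2 x) (at x)" "(Y2 has_real_derivative Y3 x) (at x)"
    "(Y3 has_real_derivative Y4 x) (at x)" for x
    unfolding Y1_def Y2_def Y3_def Y4_def using g1 g2 g3
    by (blast intro: has_real_derivative_affine_rescale)+
  moreover have "continuous_on UNIV Y4"
    unfolding Y4_def
    by (intro continuous_on_mult continuous_on_const continuous_on_compose2[OF g3_cont])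
      (auto intro: continuous_intros)
  moreover have "Y4 x * (Y1 x)^2 - 3 * Y3 x * Y2 x * Y1 x + 2 * (1 - 1 / n^2) * (Y2 x)^3 = 0" for x
    unfolding Y1_def Y2_def Y3_def Y4_def using ode \<open>n \<noteq> 0\<close> by (intro rescaled_ode) auto
  moreover have "?h integrable_on {..x}" for x
    by (rule integrable_on_atMost_vanishing_below[OF h_cont]) (rule L)
  ultimately show ?thesis
    unfolding Let_def by blast
qed

section \<open>The Jacobi elliptic functions\<close>

lemma ellF_0 [simp]: "ellF m 0 = 0"
  by (simp add: ellF_def)

context
  fixes m :: real
  assumes m: "0 \<le> m" "m < 1"
begin

lemma elliptic_radicand_pos: "0 < 1 - m * (sin t)\<^sup>2"
proof -
  have "m * (sin t)\<^sup>2 \<le> m * 1"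
    using m(1) by (intro mult_left_mono) (simp_all add: abs_square_le_1)
  then show ?thesis using m(2) by linarith
qed

lemma continuous_on_elliptic_integrand:
  "continuous_on S (\<lambda>\<theta>. 1 / sqrt (1 - m * (sin \<theta>)\<^sup>2))"
  using elliptic_radicand_pos by (intro continuous_intros) (auto simp: less_le)

lemma elliptic_integrand_ge_1: "1 \<le> 1 / sqrt (1 - m * (sin \<theta>)\<^sup>2)"
proof -
  have "sqrt (1 - m * (sin \<theta>)\<^sup>2) \<le> 1"
    using m(1) by (simp add: real_sqrt_le_1_iff)
  moreover have "0 < sqrt (1 - m * (sin \<theta>)\<^sup>2)"
    using elliptic_radicand_pos by simp
  ultimately show ?thesis by (simp add: divide_simps)
qed

lemma ellF_eq_integral_diff:
  defines "f \<equiv> \<lambda>\<theta>. 1 / sqrt (1 - m * (sin \<theta>)\<^sup>2)"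
  assumes "a \<le> x" "a \<le> 0"
  shows "ellF m x = integral {a..x} f - integral {a..0} f"
proof -
  have int: "f integrable_on {a..b}" for b
    unfolding f_def by (intro integrable_continuous_interval continuous_on_elliptic_integrand)
  show ?thesis
  proof (cases "0 \<le> x")
    case True
    have "integral {a..0} f + integral {0..x} f = integral {a..x} f"
      using Henstock_Kurzweil_Integration.integral_combine[OF assms(3) True int] .
    then show ?thesis using True by (simp add: ellF_def f_def)
  next
    case False
    have "integral {a..x} f + integral {x..0} f = integral {a..0} f"
      using Henstock_Kurzweil_Integration.integral_combine[OF assms(2) _ int] False by simp
    then show ?thesis using False by (simp add: ellF_def f_def)
  qed
qed

lemma has_real_derivative_ellF:
  "(ellF m has_real_derivative 1 / sqrt (1 - m * (sin x)\<^sup>2)) (at x)"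
proof -
  define f where "f = (\<lambda>\<theta>. 1 / sqrt (1 - m * (sin \<theta>)\<^sup>2))"
  define R where "R = \<bar>x\<bar> + 1"
  have x: "x \<in> {-R<..<R}" using R_def by auto
  have "continuous_on {-R..R} f"
    unfolding f_def by (rule continuous_on_elliptic_integrand)
  then have "((\<lambda>y. integral {-R..y} f) has_real_derivative f x) (at x within {-R..R})"
    using x by (intro integral_has_real_derivative) auto
  moreover have "x \<in> interior {-R..R}" using x by simp
  ultimately have "((\<lambda>y. integral {-R..y} f) has_real_derivative f x) (at x)"
    by (metis at_within_interior)
  then have "((\<lambda>y. integral {-R..y} f - integral {-R..0} f) has_real_derivative f x) (at x)"
    using DERIV_diff[OF _ DERIV_const] by fastforce
  then have "(ellF m has_real_derivative f x) (at x)"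
  proof (rule has_field_derivative_transform_within_open[OF _ open_greaterThanLessThan x])
    fix y assume "y \<in> {-R<..<R}"
    then show "integral {-R..y} f - integral {-R..0} f = ellF m y"
      using R_def unfolding f_def by (intro ellF_eq_integral_diff[symmetric]) auto
  qed
  then show ?thesis by (simp add: f_def)
qed

lemma strict_mono_ellF: "strict_mono (ellF m)"
proof (rule strict_monoI)
  fix a b :: real assume "a < b"
  then show "ellF m a < ellF m b"
    by (rule DERIV_pos_imp_increasing)
      (use has_real_derivative_ellF elliptic_radicand_pos in force)
qed

lemma ellF_minus: "ellF m (- x) = - ellF m x"
proof -
  have "\<forall>y. ((\<lambda>y. ellF m (- y) + ellF m y) has_real_derivative 0) (at y)"
  proof
    fix y
    have "((\<lambda>y. ellF m (- y) + ellF m y) has_real_derivative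
        1 / sqrt (1 - m * (sin (- y))\<^sup>2) * (- 1) + 1 / sqrt (1 - m * (sin y)\<^sup>2)) (at y)"
      by (intro DERIV_add DERIV_chain2[OF has_real_derivative_ellF]
          has_real_derivative_ellF DERIV_minus DERIV_ident)
    then show "((\<lambda>y. ellF m (- y) + ellF m y) has_real_derivative 0) (at y)" by simp
  qed
  from DERIV_isconst_all[OF this, of x 0] show ?thesis by simp
qed

lemma ellF_ge_self:
  assumes "0 \<le> x"
  shows "x \<le> ellF m x"
proof -
  have "((\<lambda>y. ellF m y - y) has_real_derivative 1 / sqrt (1 - m * (sin y)\<^sup>2) - 1) (at y)" for y
    by (intro DERIV_diff has_real_derivative_ellF DERIV_ident)
  then have "ellF m 0 - 0 \<le> ellF m x - x"
    using elliptic_integrand_ge_1 by (intro DERIV_nonneg_imp_nondecreasing[OF assms]) force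
  then show ?thesis by simp
qed

lemma surj_ellF: "surj (ellF m)"
proof -
  have cont: "isCont (ellF m) x" for x
    using has_real_derivative_ellF by (rule DERIV_isCont)
  have "\<exists>\<phi>. ellF m \<phi> = y" for y
  proof (cases "0 \<le> y")
    case True
    then have "\<exists>\<phi>\<ge>0. \<phi> \<le> y \<and> ellF m \<phi> = y"
      using ellF_ge_self[OF True] cont by (intro IVT) auto
    then show ?thesis by blast
  next
    case False
    have "- y \<le> ellF m (- y)" using False by (intro ellF_ge_self) auto
    then have "\<exists>\<phi>\<ge>y. \<phi> \<le> 0 \<and> ellF m \<phi> = y"
      using False cont by (intro IVT) (auto simp: ellF_minus)
    then show ?thesis by blast
  qed
  then show ?thesis by (metis surjI)
qed

lemma jacobi_am_ellF: "jacobi_am m (ellF m \<phi>) = \<phi>"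
  unfolding jacobi_am_def using strict_mono_ellF by (auto simp: strict_mono_eq)

lemma ellF_jacobi_am: "ellF m (jacobi_am m x) = x"
  using surj_ellF jacobi_am_ellF by (metis surjD)

lemma jacobi_am_minus: "jacobi_am m (- x) = - jacobi_am m x"
  by (metis ellF_jacobi_am ellF_minus jacobi_am_ellF)

lemma strict_mono_jacobi_am: "strict_mono (jacobi_am m)"
proof (rule strict_monoI)
  fix x y :: real assume "x < y"
  then show "jacobi_am m x < jacobi_am m y"
    using strict_mono_less[OF strict_mono_ellF, of "jacobi_am m x" "jacobi_am m y"]
    by (simp add: ellF_jacobi_am)
qed

lemma has_real_derivative_jacobi_am: "(jacobi_am m has_real_derivative jacobi_dn m x) (at x)"
proof -
  have "isCont (jacobi_am m) (ellF m (jacobi_am m x))"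
    using jacobi_am_ellF DERIV_isCont[OF has_real_derivative_ellF]
    by (intro isCont_inverse_function[where f="ellF m" and d=1]) auto
  then have "isCont (jacobi_am m) x"
    by (simp add: ellF_jacobi_am)
  moreover have "1 / sqrt (1 - m * (sin (jacobi_am m x))\<^sup>2) \<noteq> 0"
    using elliptic_radicand_pos[of "jacobi_am m x"] by simp
  ultimately have "(jacobi_am m has_real_derivative
      inverse (1 / sqrt (1 - m * (sin (jacobi_am m x))\<^sup>2))) (at x)"
    using ellF_jacobi_am
    by (intro DERIV_inverse_function[where f="ellF m" and g="jacobi_am m" and a="x - 1" and b="x + 1"]
        has_real_derivative_ellF) auto
  then show ?thesis by (simp add: jacobi_dn_def)
qed

lemma jacobi_dn_pos: "0 < jacobi_dn m x"
  using elliptic_radicand_pos[of "jacobi_am m x"] by (simp add: jacobi_dn_def)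

lemma jacobi_dn_squared: "(jacobi_dn m x)\<^sup>2 = 1 - m * (jacobi_sn m x)\<^sup>2"
  using elliptic_radicand_pos[of "jacobi_am m x"] by (simp add: jacobi_dn_def jacobi_sn_def)

lemma has_real_derivative_jacobi_sn:
  "(jacobi_sn m has_real_derivative jacobi_cn m x * jacobi_dn m x) (at x)"
  unfolding jacobi_sn_def[abs_def] jacobi_cn_def
  by (rule DERIV_chain2[OF DERIV_sin has_real_derivative_jacobi_am])

lemma has_real_derivative_jacobi_cn:
  "(jacobi_cn m has_real_derivative - jacobi_sn m x * jacobi_dn m x) (at x)"
  unfolding jacobi_cn_def[abs_def] jacobi_sn_def
  using DERIV_chain2[OF DERIV_cos has_real_derivative_jacobi_am] by simp

lemma has_real_derivative_jacobi_dn: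
  "(jacobi_dn m has_real_derivative - m * jacobi_sn m x * jacobi_cn m x) (at x)"
proof -
  let ?s = "jacobi_sn m x" and ?c = "jacobi_cn m x" and ?d = "jacobi_dn m x"
  have dn_eq: "jacobi_dn m = (\<lambda>x. sqrt (1 - m * (jacobi_sn m x)\<^sup>2))"
    by (simp add: fun_eq_iff jacobi_dn_def jacobi_sn_def)
  have "((\<lambda>x. (jacobi_sn m x)\<^sup>2) has_real_derivative 2 * ?s * (?c * ?d)) (at x)"
    using DERIV_power[OF has_real_derivative_jacobi_sn, of 2] by (simp add: ac_simps)
  then have "((\<lambda>x. 1 - m * (jacobi_sn m x)\<^sup>2) has_real_derivative 0 - m * (2 * ?s * (?c * ?d))) (at x)"
    by (intro DERIV_diff DERIV_const DERIV_cmult)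
  then have "(jacobi_dn m has_real_derivative
      inverse (sqrt (1 - m * ?s\<^sup>2)) / 2 * (0 - m * (2 * ?s * (?c * ?d)))) (at x)"
    unfolding dn_eq using elliptic_radicand_pos[of "jacobi_am m x"]
    by (intro DERIV_chain2[OF DERIV_real_sqrt]) (simp_all add: jacobi_sn_def)
  moreover have "inverse (sqrt (1 - m * ?s\<^sup>2)) / 2 * (0 - m * (2 * ?s * (?c * ?d))) = - m * ?s * ?c"
    using jacobi_dn_pos[of x] by (simp add: jacobi_dn_def jacobi_sn_def field_simps)
  ultimately show ?thesis by (rule DERIV_cong)
qed

lemma has_real_derivative_jacobi_sn_dn:
  "((\<lambda>x. jacobi_sn m x * jacobi_dn m x) has_real_derivative
    jacobi_cn m x * (1 - 2 * m * (jacobi_sn m x)\<^sup>2)) (at x)"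
proof -
  let ?s = "jacobi_sn m x" and ?c = "jacobi_cn m x" and ?d = "jacobi_dn m x"
  have "((\<lambda>x. jacobi_sn m x * jacobi_dn m x) has_real_derivative
      ?c * ?d * ?d + - m * ?s * ?c * ?s) (at x)"
    by (intro DERIV_mult has_real_derivative_jacobi_sn has_real_derivative_jacobi_dn)
  moreover have "?c * ?d * ?d + - m * ?s * ?c * ?s = ?c * ?d\<^sup>2 - m * ?c * ?s\<^sup>2"
    by (simp add: power2_eq_square algebra_simps)
  moreover have "\<dots> = ?c * (1 - 2 * m * ?s\<^sup>2)"
    by (simp add: jacobi_dn_squared algebra_simps)
  ultimately show ?thesis by simp
qed

lemma ellK_pos: "0 < ellK m"
  using ellF_ge_self[of "pi / 2"] pi_gt_zero unfolding ellK_def by linarith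

lemma jacobi_am_ellK: "jacobi_am m (ellK m) = pi / 2"
  by (simp add: ellK_def jacobi_am_ellF)

lemma jacobi_am_minus_ellK: "jacobi_am m (- ellK m) = - (pi / 2)"
  by (simp add: jacobi_am_minus jacobi_am_ellK)

lemma jacobi_cn_pos:
  assumes "\<bar>x\<bar> < ellK m"
  shows "0 < jacobi_cn m x"
proof -
  have "jacobi_am m (- ellK m) < jacobi_am m x" "jacobi_am m x < jacobi_am m (ellK m)"
    using assms strict_mono_jacobi_am by (auto simp: strict_mono_less)
  then show ?thesis
    unfolding jacobi_cn_def jacobi_am_ellK jacobi_am_minus_ellK by (intro cos_gt_zero_pi) auto
qed

lemma jacobi_cn_ellK:
  assumes "\<bar>x\<bar> = ellK m"
  shows "jacobi_cn m x = 0"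
proof -
  have "x = ellK m \<or> x = - ellK m" using assms by linarith
  then show ?thesis by (auto simp: jacobi_cn_def jacobi_am_ellK jacobi_am_minus_ellK)
qed

lemma jacobi_cn_nonneg:
  assumes "\<bar>x\<bar> \<le> ellK m"
  shows "0 \<le> jacobi_cn m x"
  using assms jacobi_cn_pos jacobi_cn_ellK by (cases "\<bar>x\<bar> < ellK m") (auto intro: less_imp_le)

end

section \<open>Powers of cn(x, 1/2)\<close>

abbreviation cn_half :: "real \<Rightarrow> real" where
  "cn_half \<equiv> jacobi_cn (1/2)"

abbreviation sn_dn_half :: "real \<Rightarrow> real" where
  "sn_dn_half x \<equiv> jacobi_sn (1/2) x * jacobi_dn (1/2) x"

lemma has_real_derivative_cn_half: "(cn_half has_real_derivative - sn_dn_half x) (at x)"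
  using has_real_derivative_jacobi_cn[of "1/2"] by simp

lemma has_real_derivative_sn_dn_half: "(sn_dn_half has_real_derivative (cn_half x) ^ 3) (at x)"
proof -
  have "1 - (jacobi_sn (1/2) x)\<^sup>2 = (cn_half x)\<^sup>2"
    by (simp add: jacobi_sn_def jacobi_cn_def cos_squared_eq)
  then show ?thesis
    using has_real_derivative_jacobi_sn_dn[of "1/2" x] by (simp add: power3_eq_cube power2_eq_square mult.assoc)
qed

lemma sn_dn_half_squared: "(sn_dn_half x)\<^sup>2 = (1 - (cn_half x) ^ 4) / 2"
proof -
  have "(cn_half x) ^ 4 = ((cn_half x)\<^sup>2)\<^sup>2"
    by (simp flip: power_mult)
  also have "\<dots> = (1 - (jacobi_sn (1/2) x)\<^sup>2)\<^sup>2"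
    by (simp add: jacobi_sn_def jacobi_cn_def cos_squared_eq)
  finally have "(cn_half x) ^ 4 = (1 - (jacobi_sn (1/2) x)\<^sup>2)\<^sup>2" .
  moreover have "(sn_dn_half x)\<^sup>2 = (jacobi_sn (1/2) x)\<^sup>2 * (1 - 1/2 * (jacobi_sn (1/2) x)\<^sup>2)"
    by (simp add: power_mult_distrib jacobi_dn_squared)
  ultimately show ?thesis
    by (simp add: power2_eq_square field_simps)
qed

lemma powr_add_of_nat:
  fixes u :: real
  assumes "0 < u"
  shows "u powr (r + real k) = u powr r * u ^ k"
  using assms by (simp add: powr_add powr_realpow)

lemma has_real_derivative_cn_half_powr:
  assumes "0 < cn_half x"
  shows "((\<lambda>x. cn_half x powr r) has_real_derivative - r * (sn_dn_half x * cn_half x powr (r - 1))) (at x)"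
  using DERIV_chain2[OF has_real_derivative_powr[OF assms] has_real_derivative_cn_half]
  by (simp add: algebra_simps)

lemma has_real_derivative_sn_dn_cn_half_powr:
  assumes "0 < cn_half x"
  shows "((\<lambda>x. sn_dn_half x * cn_half x powr r) has_real_derivative
    (r + 2) / 2 * cn_half x powr (r + 3) - r / 2 * cn_half x powr (r - 1)) (at x)"
proof -
  let ?u = "cn_half x" and ?w = "sn_dn_half x" and ?P = "cn_half x powr (r - 1)"
  have "((\<lambda>x. sn_dn_half x * cn_half x powr r) has_real_derivative
      ?u ^ 3 * ?u powr r + - r * (?w * ?P) * ?w) (at x)"
    by (intro DERIV_mult has_real_derivative_sn_dn_half has_real_derivative_cn_half_powr assms)
  moreover have "?u ^ 3 * ?u powr r + - r * (?w * ?P) * ?w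
      = (r + 2) / 2 * ?u powr (r + 3) - r / 2 * ?P"
  proof -
    have "?u powr r = ?P * ?u ^ 1"
      using powr_add_of_nat[OF assms, of "r - 1" 1] by simp
    then have "?u ^ 3 * ?u powr r + - r * (?w * ?P) * ?w = ?P * ?u ^ 4 - r * ?P * (?w * ?w)"
      by (simp add: algebra_simps power_numeral_reduce)
    also have "\<dots> = ?P * ?u ^ 4 - r * ?P * ((1 - ?u ^ 4) / 2)"
      using sn_dn_half_squared[of x] unfolding power2_eq_square by (simp only:)
    also have "\<dots> = (r + 2) / 2 * (?P * ?u ^ 4) - r / 2 * ?P"
      by (simp add: field_simps)
    also have "?P * ?u ^ 4 = ?u powr (r + 3)"
      using powr_add_of_nat[OF assms, of "r - 1" 4] by (simp add: add.commute)
    finally show ?thesis .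
  qed
  ultimately show ?thesis by simp
qed

text \<open>Derivatives of \<open>cn(x, 1/2)^n\<close> where cn is positive. For \<open>n > 3\<close> every exponent of cn
  in them is positive, so they vanish at the zeros \<open>\<plusminus>K\<close> of cn.\<close>

definition cn_pow' :: "real \<Rightarrow> real \<Rightarrow> real" where
  "cn_pow' n x = - n * (sn_dn_half x * cn_half x powr (n - 1))"

definition cn_pow'' :: "real \<Rightarrow> real \<Rightarrow> real" where
  "cn_pow'' n x = n * (n - 1) / 2 * cn_half x powr (n - 2) - n * (n + 1) / 2 * cn_half x powr (n + 2)"

definition cn_pow''' :: "real \<Rightarrow> real \<Rightarrow> real" where
  "cn_pow''' n x = - (n * (n - 1) * (n - 2) / 2) * (sn_dn_half x * cn_half x powr (n - 3))
                   + n * (n + 1) * (n + 2) / 2 * (sn_dn_half x * cn_half x powr (n + 1))"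

lemma has_real_derivative_cn_half_pow:
  assumes "0 < cn_half x"
  shows "((\<lambda>x. cn_half x powr n) has_real_derivative cn_pow' n x) (at x)"
  unfolding cn_pow'_def by (rule has_real_derivative_cn_half_powr[OF assms])

lemma has_real_derivative_cn_pow':
  assumes "0 < cn_half x"
  shows "(cn_pow' n has_real_derivative cn_pow'' n x) (at x)"
proof -
  have "(cn_pow' n has_real_derivative
      - n * ((n - 1 + 2) / 2 * cn_half x powr (n - 1 + 3) - (n - 1) / 2 * cn_half x powr (n - 1 - 1))) (at x)"
    unfolding cn_pow'_def[abs_def]
    by (intro DERIV_cmult has_real_derivative_sn_dn_cn_half_powr assms)
  moreover have "n - 1 + 3 = n + 2" "n - 1 - 1 = n - 2" by simp_all
  ultimately show ?thesis
    unfolding cn_pow''_def by (simp add: field_simps)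
qed

lemma has_real_derivative_cn_pow'':
  assumes "0 < cn_half x"
  shows "(cn_pow'' n has_real_derivative cn_pow''' n x) (at x)"
proof -
  have "(cn_pow'' n has_real_derivative
      n * (n - 1) / 2 * (- (n - 2) * (sn_dn_half x * cn_half x powr (n - 2 - 1)))
      - n * (n + 1) / 2 * (- (n + 2) * (sn_dn_half x * cn_half x powr (n + 2 - 1)))) (at x)"
    unfolding cn_pow''_def[abs_def]
    by (intro DERIV_diff DERIV_cmult has_real_derivative_cn_half_powr assms)
  moreover have "n - 2 - 1 = n - 3" "n + 2 - 1 = n + 1" by simp_all
  ultimately show ?thesis
    unfolding cn_pow'''_def by (simp add: field_simps)
qed

lemma cn_pow_ode_polynomial_identity:
  fixes n u w V :: real
  assumes "w * w = (1 - u ^ 4) / 2" "n \<noteq> 0"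
  shows "n * (- (n * (n - 1) * (n - 2) / 2) * (w * V) + n * (n + 1) * (n + 2) / 2 * (w * (V * u ^ 4)))
           * (V * u ^ 3)\<^sup>2
         - 3 * n * (n * (n - 1) / 2 * (V * u) - n * (n + 1) / 2 * (V * u ^ 5))
           * (- n * (w * (V * u ^ 2))) * (V * u ^ 3)
         + 2 * (n - 1 / n) * (- n * (w * (V * u ^ 2))) ^ 3 = 0"
proof -
  have "n - 1 / n = (n * n - 1) / n" using assms(2) by (simp add: field_simps)
  then have "n * (- (n * (n - 1) * (n - 2) / 2) * (w * V) + n * (n + 1) * (n + 2) / 2 * (w * (V * u ^ 4)))
           * (V * u ^ 3)\<^sup>2
         - 3 * n * (n * (n - 1) / 2 * (V * u) - n * (n + 1) / 2 * (V * u ^ 5))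
           * (- n * (w * (V * u ^ 2))) * (V * u ^ 3)
         + 2 * (n - 1 / n) * (- n * (w * (V * u ^ 2))) ^ 3
      = n\<^sup>2 * w * V ^ 3 * u ^ 6 * ((n\<^sup>2 - 1) * (1 - u ^ 4) - 2 * (n\<^sup>2 - 1) * (w * w))"
    using assms(2) by (simp add: field_simps power_numeral_reduce power2_eq_square)
  also have "\<dots> = 0"
    unfolding assms(1) by simp
  finally show ?thesis .
qed

lemma cn_pow_ode:
  assumes "0 < cn_half x" "n \<noteq> 0"
  shows "n * cn_pow''' n x * (cn_half x powr n)\<^sup>2 - 3 * n * cn_pow'' n x * cn_pow' n x * cn_half x powr n
    + 2 * (n - 1 / n) * (cn_pow' n x) ^ 3 = 0"
proof -
  let ?u = "cn_half x" and ?V = "cn_half x powr (n - 3)"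
  have pow: "?u powr (n - 3 + real k) = ?V * ?u ^ k" for k
    by (rule powr_add_of_nat[OF assms(1)])
  have "?u powr n = ?V * ?u ^ 3" "?u powr (n - 1) = ?V * ?u ^ 2" "?u powr (n - 2) = ?V * ?u ^ 1"
    "?u powr (n + 1) = ?V * ?u ^ 4" "?u powr (n + 2) = ?V * ?u ^ 5"
    using pow[of 3] pow[of 2] pow[of 1] pow[of 4] pow[of 5] by (simp_all add: algebra_simps)
  moreover have "sn_dn_half x * sn_dn_half x = (1 - ?u ^ 4) / 2"
    using sn_dn_half_squared[of x] by (simp add: power2_eq_square)
  ultimately show ?thesis
    unfolding cn_pow'_def cn_pow''_def cn_pow'''_def
    using cn_pow_ode_polynomial_identity[where u = ?u and w = "sn_dn_half x" and V = ?V, OF _ assms(2)]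
    by simp
qed

lemma continuous_on_cn_half_powr:
  fixes r :: real
  assumes "0 < r"
  shows "continuous_on {- ellK (1/2) .. ellK (1/2)} (\<lambda>x. cn_half x powr r)"
proof (rule continuous_on_powr')
  show "continuous_on {- ellK (1/2) .. ellK (1/2)} cn_half"
    using has_real_derivative_cn_half
    by (intro continuous_at_imp_continuous_on) (blast intro: DERIV_isCont)
  show "\<forall>x\<in>{- ellK (1/2) .. ellK (1/2)}. 0 \<le> cn_half x \<and> (cn_half x = 0 \<longrightarrow> 0 < r)"
    using assms by (auto intro!: jacobi_cn_nonneg)
qed (rule continuous_on_const)

lemma continuous_on_cn_pow_derivs:
  assumes "3 < n"
  shows "continuous_on {- ellK (1/2) .. ellK (1/2)} (cn_pow' n)"
    and "continuous_on {- ellK (1/2) .. ellK (1/2)} (cn_pow'' n)"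
    and "continuous_on {- ellK (1/2) .. ellK (1/2)} (cn_pow''' n)"
proof -
  have w: "continuous_on S sn_dn_half" for S
    using has_real_derivative_sn_dn_half
    by (intro continuous_at_imp_continuous_on) (blast intro: DERIV_isCont)
  note rules = continuous_on_mult continuous_on_add continuous_on_diff continuous_on_minus
    continuous_on_const w continuous_on_cn_half_powr
  show "continuous_on {- ellK (1/2) .. ellK (1/2)} (cn_pow' n)"
    unfolding cn_pow'_def[abs_def] using assms by (intro rules) simp
  show "continuous_on {- ellK (1/2) .. ellK (1/2)} (cn_pow'' n)"
    unfolding cn_pow''_def[abs_def] using assms by (intro rules) simp_all
  show "continuous_on {- ellK (1/2) .. ellK (1/2)} (cn_pow''' n)"
    unfolding cn_pow'''_def[abs_def] using assms by (intro rules) simp_all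
qed

lemma cn_pow_derivs_ellK:
  assumes "3 < n" "\<bar>x\<bar> = ellK (1/2)"
  shows "cn_half x powr n = 0" "cn_pow' n x = 0" "cn_pow'' n x = 0" "cn_pow''' n x = 0"
  using assms jacobi_cn_ellK[of "1/2" x]
  by (simp_all add: cn_pow'_def cn_pow''_def cn_pow'''_def)

lemma has_real_derivative_cn_pow_cutoff:
  assumes "3 < n"
  defines "K \<equiv> ellK (1/2)"
  shows "((\<lambda>x. if x \<in> {-K..K} then cn_half x powr n else 0) has_real_derivative
      (if x \<in> {-K..K} then cn_pow' n x else 0)) (at x)"
    and "((\<lambda>x. if x \<in> {-K..K} then cn_pow' n x else 0) has_real_derivative
      (if x \<in> {-K..K} then cn_pow'' n x else 0)) (at x)"
    and "((\<lambda>x. if x \<in> {-K..K} then cn_pow'' n x else 0) has_real_derivative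
      (if x \<in> {-K..K} then cn_pow''' n x else 0)) (at x)"
proof -
  have K: "- K \<le> K" using ellK_pos[of "1/2"] by (simp add: K_def)
  have inside: "0 < cn_half y" if "- K < y" "y < K" for y
    using that by (intro jacobi_cn_pos) (auto simp: K_def)
  have "\<bar>- K\<bar> = ellK (1/2)" "\<bar>K\<bar> = ellK (1/2)"
    using ellK_pos[of "1/2"] by (simp_all add: K_def)
  note ends = cn_pow_derivs_ellK[OF assms(1) this(1)] cn_pow_derivs_ellK[OF assms(1) this(2)]
  have "0 < n" using assms(1) by simp
  note cont = continuous_on_cn_half_powr[OF this] continuous_on_cn_pow_derivs[OF assms(1)]
  show "((\<lambda>x. if x \<in> {-K..K} then cn_half x powr n else 0) has_real_derivative
      (if x \<in> {-K..K} then cn_pow' n x else 0)) (at x)"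
    using K cont ends inside by (intro has_real_derivative_cutoff has_real_derivative_cn_half_pow)
      (simp_all add: K_def)
  show "((\<lambda>x. if x \<in> {-K..K} then cn_pow' n x else 0) has_real_derivative
      (if x \<in> {-K..K} then cn_pow'' n x else 0)) (at x)"
    using K cont ends inside by (intro has_real_derivative_cutoff has_real_derivative_cn_pow')
      (simp_all add: K_def)
  show "((\<lambda>x. if x \<in> {-K..K} then cn_pow'' n x else 0) has_real_derivative
      (if x \<in> {-K..K} then cn_pow''' n x else 0)) (at x)"
    using K cont ends inside by (intro has_real_derivative_cutoff has_real_derivative_cn_pow'')
      (simp_all add: K_def)
qed

lemma continuous_on_cn_pow'''_cutoff:
  assumes "3 < n"
  shows "continuous_on UNIV
    (\<lambda>x. if x \<in> {- ellK (1/2) .. ellK (1/2)} then cn_pow''' n x else 0)"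
  using ellK_pos[of "1/2"] cn_pow_derivs_ellK[OF assms, of "ellK (1/2)"]
    cn_pow_derivs_ellK[OF assms, of "- ellK (1/2)"]
  by (intro continuous_on_cutoff continuous_on_cn_pow_derivs assms) auto

lemma cn_pow_cutoff_ode:
  assumes "3 < n"
  defines "K \<equiv> ellK (1/2)"
  defines "g \<equiv> \<lambda>x. if x \<in> {-K..K} then cn_half x powr n else 0"
    and "g1 \<equiv> \<lambda>x. if x \<in> {-K..K} then cn_pow' n x else 0"
    and "g2 \<equiv> \<lambda>x. if x \<in> {-K..K} then cn_pow'' n x else 0"
    and "g3 \<equiv> \<lambda>x. if x \<in> {-K..K} then cn_pow''' n x else 0"
  shows "n * g3 x * (g x)^2 - 3 * n * g2 x * g1 x * g x + 2 * (n - 1 / n) * (g1 x)^3 = 0"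
proof (cases "\<bar>x\<bar> < K")
  case True
  then have "0 < cn_half x" by (intro jacobi_cn_pos) (auto simp: K_def)
  then show ?thesis
    using True cn_pow_ode[of x n] assms(1) by (simp add: g_def g1_def g2_def g3_def abs_less_iff)
next
  case False
  then have "g x = 0" "g1 x = 0"
    using cn_pow_derivs_ellK[OF assms(1), of x] by (auto simp: g_def g1_def K_def)
  then show ?thesis by simp
qed

theorem mainTheorem2:
  fixes n :: real and g :: "real \<Rightarrow> real"
  assumes n3: "n > 3"
    and g_def: "\<And>x. g x = (if x \<in> {- ellK (1/2) .. ellK (1/2)} then (jacobi_cn (1/2) x) powr n else 0)"
  shows "(\<exists>g1 g2 g3.
            (\<forall>x. (g has_real_derivative g1 x) (at x)) \<and>
            (\<forall>x. (g1 has_real_derivative g2 x) (at x)) \<and>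
            (\<forall>x. (g2 has_real_derivative g3 x) (at x)) \<and>
            continuous_on UNIV g3 \<and>
            (\<forall>x. n * g3 x * (g x)^2 - 3 * n * g2 x * g1 x * g x + 2 * (n - 1 / n) * (g1 x)^3 = 0))
      \<and> (\<forall>\<alpha> \<beta> \<gamma> \<delta> :: real. \<alpha> \<noteq> 0 \<longrightarrow>
            (\<forall>x. (\<lambda>t. g (\<alpha> * t + \<beta>)) integrable_on {..x}) \<and>
            (\<exists>Y1 Y2 Y3 Y4.
               let Y = (\<lambda>x. \<gamma> * integral {..x} (\<lambda>t. g (\<alpha> * t + \<beta>)) + \<delta>) in
               (\<forall>x. (Y has_real_derivative Y1 x) (at x)) \<and>
               (\<forall>x. (Y1 has_real_derivative Y2 x) (at x)) \<and>
               (\<forall>x. (Y2 has_real_derivative Y3 x) (at x)) \<and>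
               (\<forall>x. (Y3 has_real_derivative Y4 x) (at x)) \<and>
               continuous_on UNIV Y4 \<and>
               (\<forall>x. Y4 x * (Y1 x)^2 - 3 * Y3 x * Y2 x * Y1 x + 2 * (1 - 1 / n^2) * (Y2 x)^3 = 0)))"
proof -
  define K where "K = ellK (1/2)"
  define g1 where "g1 = (\<lambda>x. if x \<in> {-K..K} then cn_pow' n x else 0)"
  define g2 where "g2 = (\<lambda>x. if x \<in> {-K..K} then cn_pow'' n x else 0)"
  define g3 where "g3 = (\<lambda>x. if x \<in> {-K..K} then cn_pow''' n x else 0)"
  have g: "g = (\<lambda>x. if x \<in> {-K..K} then cn_half x powr n else 0)"
    using g_def by (simp add: fun_eq_iff K_def)
  have d1: "\<forall>x. (g has_real_derivative g1 x) (at x)"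
    and d2: "\<forall>x. (g1 has_real_derivative g2 x) (at x)"
    and d3: "\<forall>x. (g2 has_real_derivative g3 x) (at x)"
    unfolding g g1_def g2_def g3_def K_def using has_real_derivative_cn_pow_cutoff[OF n3] by blast+
  have c3: "continuous_on UNIV g3"
    unfolding g3_def K_def by (rule continuous_on_cn_pow'''_cutoff[OF n3])
  have ode: "\<forall>x. n * g3 x * (g x)^2 - 3 * n * g2 x * g1 x * g x + 2 * (n - 1 / n) * (g1 x)^3 = 0"
    unfolding g g1_def g2_def g3_def K_def using cn_pow_cutoff_ode[OF n3] by blast
  have "n \<noteq> 0" "\<And>x. x \<notin> {-K..K} \<Longrightarrow> g x = 0"
    using n3 by (auto simp: g)
  note rescaled = primitive_of_rescaled_ode[OF d1 d2 d3 c3 ode this(1) _ this(2)]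
  show ?thesis
    using d1 d2 d3 c3 ode rescaled by blast
qed

end
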